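(* For every $T\in[0,\infty]$ there exists a joint strategy $\pi^*\in\Pi$ such that $$J_T(\pi^* )=\inf_{\pi\in\Pi}J_T(\pi).$$
   Context: Let $G=(V,E,A,\phi)$ be a finite connected undirected graph with node set $V$, edge set $E$, edge lengths $A:E\to\mathbb{R}_{>0}$ and node weights $\phi:V\to\mathbb{R}_{>0}$. Let $|G|$ be its metric graph (each edge $e$ realized as a closed interval of length $A(e)$ glued at its endpoints) with the shortest-path metric $d$. Fix $k\ge 1$ robots $r_1,\dots,r_k$ and equip $|G|^k$ with $d_k(p,p')=\max_{i}d(p_i,p'_i)$. The set of feasible joint strategies is $\Pi=\{\pi\in C([0,\infty),|G|^k):\ d_k(\pi(t),\pi(t'))\le |t-t'|\ \forall t,t'\ge0\}$, and we write $\pi=(\pi_{r_1},\dots,\pi_{r_k})$. For $v\in V$ and $t\ge0$ let $\tau^\pi(v,t)=\sup\{t'\le t:\ \pi_r(t')=v\text{ for some }r\}$ if this set is nonempty and $\tau^\pi(v,t)=0$ otherwise; the latency is $L^\pi_v(t)=t-\tau^\pi(v,t)$ and the instantaneous worst weighted latency is $M^\pi(t)=\max_{v\in V}\phi(v)L^\pi_v(t)$. For $T\in[0,\infty)$ set $J_T(\pi)=\sup_{t\ge T}M^\pi(t)\in[0,\infty]$, and $J_\infty(\pi)=\limsup_{t\to\infty}M^\pi(t)$. *)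

theory Defs
  imports "HOL-Analysis.Analysis"
begin

definition is_walk :: "'v set set \<Rightarrow> 'v \<Rightarrow> 'v \<Rightarrow> 'v list \<Rightarrow> bool" where
  "is_walk E u w xs \<longleftrightarrow> xs \<noteq> [] \<and> hd xs = u \<and> last xs = w \<and>
     (\<forall>i. Suc i < length xs \<longrightarrow> {xs ! i, xs ! Suc i} \<in> E)"

definition walk_len :: "('v set \<Rightarrow> real) \<Rightarrow> 'v list \<Rightarrow> real" where
  "walk_len A xs = (\<Sum>i<length xs - 1. A {xs ! i, xs ! Suc i})"

definition node_dist :: "'v set set \<Rightarrow> ('v set \<Rightarrow> real) \<Rightarrow> 'v \<Rightarrow> 'v \<Rightarrow> real" where
  "node_dist E A u w = Inf {walk_len A xs | xs. is_walk E u w xs}"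

definition graph_ok :: "'v set \<Rightarrow> 'v set set \<Rightarrow> ('v set \<Rightarrow> real) \<Rightarrow> ('v \<Rightarrow> real) \<Rightarrow> bool" where
  "graph_ok V E A phi \<longleftrightarrow> finite V \<and> V \<noteq> {} \<and>
     (\<forall>e\<in>E. e \<subseteq> V \<and> card e = 2 \<and> A e > 0) \<and>
     (\<forall>v\<in>V. phi v > 0) \<and>
     (\<forall>u\<in>V. \<forall>w\<in>V. \<exists>xs. is_walk E u w xs)"

text \<open>\<open>Vtx v\<close> is the node v; \<open>Mid u v s\<close> is the interior point of edge {u,v} at distance s
  from u (0 < s < A{u,v}); \<open>Mid u v s\<close> and \<open>Mid v u (A{u,v} - s)\<close> denote the same point
  (distance 0 between them).\<close>
datatype 'v mpoint = Vtx 'v | Mid 'v 'v real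

definition valid_pt :: "'v set \<Rightarrow> 'v set set \<Rightarrow> ('v set \<Rightarrow> real) \<Rightarrow> 'v mpoint \<Rightarrow> bool" where
  "valid_pt V E A p = (case p of Vtx v \<Rightarrow> v \<in> V
     | Mid u v s \<Rightarrow> {u, v} \<in> E \<and> 0 < s \<and> s < A {u, v})"

fun anchors :: "('v set \<Rightarrow> real) \<Rightarrow> 'v mpoint \<Rightarrow> ('v \<times> real) set" where
  "anchors A (Vtx v) = {(v, 0)}"
| "anchors A (Mid u v s) = {(u, s), (v, A {u, v} - s)}"

text \<open>Direct travel inside a common edge.\<close>
fun direct :: "('v set \<Rightarrow> real) \<Rightarrow> 'v mpoint \<Rightarrow> 'v mpoint \<Rightarrow> real set" where
  "direct A (Mid u v s) (Mid u' v' s') =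
     (if u = u' \<and> v = v' then {\<bar>s - s'\<bar>}
      else if u = v' \<and> v = u' then {\<bar>s - (A {u, v} - s')\<bar>} else {})"
| "direct A _ _ = {}"

definition mdist :: "'v set set \<Rightarrow> ('v set \<Rightarrow> real) \<Rightarrow> 'v mpoint \<Rightarrow> 'v mpoint \<Rightarrow> real" where
  "mdist E A p q = Min ((\<lambda>((x, a), (y, b)). a + node_dist E A x y + b) ` (anchors A p \<times> anchors A q)
                        \<union> direct A p q)"

definition strategies :: "'v set \<Rightarrow> 'v set set \<Rightarrow> ('v set \<Rightarrow> real) \<Rightarrow> nat \<Rightarrow> (real \<Rightarrow> nat \<Rightarrow> 'v mpoint) set" where
  "strategies V E A k = {\<pi>. (\<forall>t\<ge>0. \<forall>i<k. valid_pt V E A (\<pi> t i)) \<and>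
     (\<forall>t\<ge>0. \<forall>t'\<ge>0. Max ((\<lambda>i. mdist E A (\<pi> t i) (\<pi> t' i)) ` {..<k}) \<le> \<bar>t - t'\<bar>)}"

definition last_visit :: "nat \<Rightarrow> (real \<Rightarrow> nat \<Rightarrow> 'v mpoint) \<Rightarrow> 'v \<Rightarrow> real \<Rightarrow> real" where
  "last_visit k \<pi> v t =
     (let S = {t'. 0 \<le> t' \<and> t' \<le> t \<and> (\<exists>i<k. \<pi> t' i = Vtx v)} in if S = {} then 0 else Sup S)"

definition latency :: "nat \<Rightarrow> (real \<Rightarrow> nat \<Rightarrow> 'v mpoint) \<Rightarrow> 'v \<Rightarrow> real \<Rightarrow> real" where
  "latency k \<pi> v t = t - last_visit k \<pi> v t"

definition worst_lat :: "'v set \<Rightarrow> ('v \<Rightarrow> real) \<Rightarrow> nat \<Rightarrow> (real \<Rightarrow> nat \<Rightarrow> 'v mpoint) \<Rightarrow> real \<Rightarrow> real" where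
  "worst_lat V phi k \<pi> t = Max ((\<lambda>v. phi v * latency k \<pi> v t) ` V)"

definition cost :: "'v set \<Rightarrow> ('v \<Rightarrow> real) \<Rightarrow> nat \<Rightarrow> ereal \<Rightarrow> (real \<Rightarrow> nat \<Rightarrow> 'v mpoint) \<Rightarrow> ereal" where
  "cost V phi k T \<pi> =
     (if T = \<infinity> then Limsup at_top (\<lambda>t. ereal (worst_lat V phi k \<pi> t))
      else (SUP t\<in>{real_of_ereal T..}. ereal (worst_lat V phi k \<pi> t)))"

end

theory Submission
  imports Defs
begin

(* Take strategies whose costs decrease to the infimum c. Near-optimality is recorded through
   visits only: from time T on (for T = infinity after discarding an initial period), every
   node v is visited within every window of length slightly above c / phi v. Along a free
   ultrafilter on the index set, the visits of each robot accumulate to a closed schedule of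
   (time, node) pairs that respects the travel distances. Such a schedule is realised by a
   1-Lipschitz trajectory following shortest walks between scheduled visits. The resulting
   limit strategy visits every node v within windows of length c / phi v, so its cost is at
   most c. *)

lemma walk_len_Nil [simp]: "walk_len A [] = 0"
  and walk_len_single [simp]: "walk_len A [a] = 0"
  by (simp_all add: walk_len_def)

lemma walk_len_Cons2 [simp]: "walk_len A (a # b # r) = A {a, b} + walk_len A (b # r)"
  unfolding walk_len_def by (simp add: sum.lessThan_Suc_shift del: sum.lessThan_Suc)

lemma is_walk_Nil [simp]: "\<not> is_walk E u w []"
  and is_walk_single [simp]: "is_walk E u w [a] \<longleftrightarrow> u = a \<and> w = a"
  by (auto simp: is_walk_def)

lemma is_walk_Cons2 [simp]:
  "is_walk E u w (a # b # r) \<longleftrightarrow> u = a \<and> {a, b} \<in> E \<and> is_walk E b w (b # r)"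
proof -
  have "(\<forall>i. P i) \<longleftrightarrow> P 0 \<and> (\<forall>i. P (Suc i))" for P :: "nat \<Rightarrow> bool"
    by (metis not0_implies_Suc)
  from this[of "\<lambda>i. Suc i < length (a # b # r) \<longrightarrow> {(a # b # r) ! i, (a # b # r) ! Suc i} \<in> E"]
  show ?thesis by (auto simp: is_walk_def)
qed

lemma is_walk_Cons_hd: "is_walk E u w (a # r) \<Longrightarrow> a = u"
  by (simp add: is_walk_def)

lemma is_walk_append:
  assumes "is_walk E u v xs" "is_walk E v w ys"
  shows "is_walk E u w (xs @ tl ys) \<and> walk_len A (xs @ tl ys) = walk_len A xs + walk_len A ys"
  using assms
proof (induction xs arbitrary: u rule: induct_list012)
  case (2 a)
  then show ?case by (cases ys) (auto dest: is_walk_Cons_hd)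
qed auto

lemma is_walk_rev:
  assumes "is_walk E u w xs"
  shows "is_walk E w u (rev xs) \<and> walk_len A (rev xs) = walk_len A xs"
  using assms
proof (induction xs arbitrary: u rule: induct_list012)
  case (3 a b r)
  have "is_walk E w b (rev (b # r)) \<and> walk_len A (rev (b # r)) = walk_len A (b # r)"
    using "3.IH"(2)[of b] "3.prems" by simp
  moreover have "is_walk E b a [b, a]" using 3 by (simp add: insert_commute)
  ultimately show ?case
    using 3 is_walk_append[of E w b "rev (b # r)" a "[b, a]" A] by (simp add: insert_commute)
qed auto

lemma node_dist_sym: "node_dist E A u w = node_dist E A w u"
proof -
  have "{walk_len A xs | xs. is_walk E u w xs} \<subseteq> {walk_len A xs | xs. is_walk E w u xs}" for u w
  proof
    fix x assume "x \<in> {walk_len A xs | xs. is_walk E u w xs}"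
    then obtain xs where "is_walk E u w xs" "x = walk_len A xs" by blast
    then show "x \<in> {walk_len A xs | xs. is_walk E w u xs}"
      using is_walk_rev[of E u w xs A] by (auto intro!: exI[of _ "rev xs"])
  qed
  then have "{walk_len A xs | xs. is_walk E u w xs} = {walk_len A xs | xs. is_walk E w u xs}"
    by (intro subset_antisym)
  then show ?thesis
    unfolding node_dist_def by simp
qed

locale patrol_graph =
  fixes V :: "'v set" and E :: "'v set set" and A :: "'v set \<Rightarrow> real" and phi :: "'v \<Rightarrow> real"
  assumes graph_ok: "graph_ok V E A phi"
begin

abbreviation "nd \<equiv> node_dist E A"

lemma finite_V: "finite V" and V_nonempty: "V \<noteq> {}" and phi_pos: "v \<in> V \<Longrightarrow> phi v > 0"
  and walk_exists: "u \<in> V \<Longrightarrow> w \<in> V \<Longrightarrow> \<exists>xs. is_walk E u w xs"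
  using graph_ok by (auto simp: graph_ok_def)

lemma edgeD:
  assumes "{a, b} \<in> E"
  shows "a \<in> V" "b \<in> V" "0 < A {a, b}"
  using graph_ok assms by (auto simp: graph_ok_def)

lemma finite_E: "finite E"
proof -
  have "E \<subseteq> Pow V" using graph_ok by (auto simp: graph_ok_def)
  then show ?thesis using finite_V by (meson finite_Pow_iff finite_subset)
qed

definition min_edge :: real where
  "min_edge = (if E = {} then 1 else Min (A ` E))"

lemma min_edge_pos: "min_edge > 0"
  using finite_E graph_ok by (auto simp: min_edge_def graph_ok_def)

lemma min_edge_le: "e \<in> E \<Longrightarrow> min_edge \<le> A e"
  using finite_E by (auto simp: min_edge_def)

lemma walk_len_ge_length:
  "is_walk E u w xs \<Longrightarrow> min_edge * (real (length xs) - 1) \<le> walk_len A xs"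
proof (induction xs arbitrary: u rule: induct_list012)
  case (3 a b r)
  then have "min_edge \<le> A {a, b}" by (auto intro: min_edge_le)
  with 3 "3.IH"(2)[of b] show ?case by (auto simp: algebra_simps)
qed auto

lemma walk_len_nonneg: "is_walk E u w xs \<Longrightarrow> 0 \<le> walk_len A xs"
  using walk_len_ge_length[of u w xs] min_edge_pos
  by (cases xs) (auto intro: order_trans[rotated])

lemma walk_set: "is_walk E u w xs \<Longrightarrow> u \<in> V \<Longrightarrow> set xs \<subseteq> V"
proof (induction xs arbitrary: u rule: induct_list012)
  case (3 a b r)
  then show ?case using edgeD[of a b] by auto
qed auto

lemma node_dist_le: "is_walk E u w xs \<Longrightarrow> nd u w \<le> walk_len A xs"
  unfolding node_dist_def
  by (rule cInf_lower) (auto intro!: bdd_belowI[of _ 0] walk_len_nonneg)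

lemma node_dist_edge: "{a, b} \<in> E \<Longrightarrow> nd a b \<le> A {a, b}"
  using node_dist_le[of a b "[a, b]"] by simp

text \<open>Walks whose length is bounded by that of a fixed walk have boundedly many nodes, so
  only finitely many lengths compete for the infimum.\<close>
lemma node_dist_attained:
  assumes "u \<in> V" "w \<in> V"
  shows "\<exists>xs. is_walk E u w xs \<and> walk_len A xs = nd u w"
proof -
  obtain xs0 where xs0: "is_walk E u w xs0" using walk_exists assms by blast
  define B where "B = walk_len A xs0"
  define N where "N = nat \<lceil>B / min_edge\<rceil> + 1"
  let ?S = "{walk_len A xs | xs. is_walk E u w xs}"
  let ?SB = "{walk_len A xs | xs. is_walk E u w xs \<and> walk_len A xs \<le> B}"
  have "?SB \<subseteq> walk_len A ` {xs. set xs \<subseteq> V \<and> length xs \<le> N}"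
  proof
    fix x assume "x \<in> ?SB"
    then obtain xs where xs: "is_walk E u w xs" "walk_len A xs \<le> B" "x = walk_len A xs" by auto
    have "min_edge * (real (length xs) - 1) \<le> B"
      using walk_len_ge_length[OF xs(1)] xs(2) by linarith
    then have "real (length xs) - 1 \<le> B / min_edge"
      using min_edge_pos by (simp add: pos_le_divide_eq mult.commute)
    then have "length xs \<le> N" unfolding N_def by linarith
    then show "x \<in> walk_len A ` {xs. set xs \<subseteq> V \<and> length xs \<le> N}"
      using xs walk_set[OF xs(1) assms(1)] by auto
  qed
  then have fin: "finite ?SB"
    by (rule finite_subset) (auto intro: finite_lists_length_le finite_V)
  have B: "B \<in> ?SB" using xs0 B_def by auto
  have "Min ?SB \<in> ?SB" using fin B by (intro Min_in) auto
  moreover have "Min ?SB \<le> x" if "x \<in> ?S" for x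
  proof (cases "x \<le> B")
    case True
    then show ?thesis using that fin by (auto intro: Min_le)
  next
    case False
    then show ?thesis using Min_le[OF fin B] by linarith
  qed
  ultimately have "nd u w = Min ?SB"
    unfolding node_dist_def by (intro cInf_eq_minimum) auto
  then show ?thesis using \<open>Min ?SB \<in> ?SB\<close> by auto
qed

lemma node_dist_nonneg: "u \<in> V \<Longrightarrow> w \<in> V \<Longrightarrow> 0 \<le> nd u w"
  using node_dist_attained walk_len_nonneg by metis

lemma node_dist_refl: "v \<in> V \<Longrightarrow> nd v v = 0"
  using node_dist_le[of v v "[v]"] node_dist_nonneg[of v v] by simp

lemma node_dist_triangle:
  assumes "u \<in> V" "v \<in> V" "w \<in> V"
  shows "nd u w \<le> nd u v + nd v w"
proof -
  obtain xs where xs: "is_walk E u v xs" "walk_len A xs = nd u v"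
    using node_dist_attained assms by blast
  obtain ys where ys: "is_walk E v w ys" "walk_len A ys = nd v w"
    using node_dist_attained assms by blast
  show ?thesis
    using is_walk_append[OF xs(1) ys(1), of A] node_dist_le[of u w "xs @ tl ys"] xs ys by auto
qed

lemma node_dist_pos:
  assumes "u \<in> V" "w \<in> V" "u \<noteq> w"
  shows "0 < nd u w"
proof -
  obtain xs where xs: "is_walk E u w xs" "walk_len A xs = nd u w"
    using node_dist_attained assms by blast
  have "2 \<le> length xs" using xs assms by (cases xs rule: remdups_adj.cases) auto
  then have "min_edge \<le> min_edge * (real (length xs) - 1)"
    using min_edge_pos by (simp add: mult_le_cancel_left1)
  then show ?thesis using walk_len_ge_length[OF xs(1)] xs(2) min_edge_pos by linarith
qed

definition shortest_walk :: "'v \<Rightarrow> 'v \<Rightarrow> 'v list" where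
  "shortest_walk a b = (SOME xs. is_walk E a b xs \<and> walk_len A xs = nd a b)"

lemma shortest_walk:
  "a \<in> V \<Longrightarrow> b \<in> V \<Longrightarrow> is_walk E a b (shortest_walk a b) \<and> walk_len A (shortest_walk a b) = nd a b"
  unfolding shortest_walk_def by (rule someI_ex) (rule node_dist_attained)

end

lemma direct_sym: "direct A p q = direct A q p"
proof (cases p; cases q)
  fix u v s u' v' s'
  assume pq: "p = Mid u v s" "q = Mid u' v' s'"
  have "\<bar>s - (X - s')\<bar> = \<bar>s' - (X - s)\<bar>" for X :: real by arith
  then show ?thesis
    using pq by (auto simp: abs_minus_commute insert_commute)
qed auto

lemma finite_anchors: "finite (anchors A p)"
  by (cases p) auto

lemma finite_direct: "finite (direct A p q)"
  by (cases p; cases q) auto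

lemma mdist_Vtx [simp]: "mdist E A (Vtx a) (Vtx b) = node_dist E A a b"
  by (simp add: mdist_def)

lemma mdist_le_anchors:
  "(x, a) \<in> anchors A p \<Longrightarrow> (y, b) \<in> anchors A q \<Longrightarrow> mdist E A p q \<le> a + node_dist E A x y + b"
  unfolding mdist_def
  by (rule Min_le) (auto simp: finite_anchors finite_direct intro!: rev_image_eqI[of "((x, a), (y, b))"])

lemma mdist_le_direct: "d \<in> direct A p q \<Longrightarrow> mdist E A p q \<le> d"
  unfolding mdist_def by (rule Min_le) (auto simp: finite_anchors finite_direct)

lemma mdist_sym: "mdist E A p q = mdist E A q p"
proof -
  let ?via = "\<lambda>p q. (\<lambda>((x, a), (y, b)). a + node_dist E A x y + b) ` (anchors A p \<times> anchors A q)"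
  have "?via p q \<subseteq> ?via q p" for p q
  proof
    fix z assume "z \<in> ?via p q"
    then obtain x a y b where "(x, a) \<in> anchors A p" "(y, b) \<in> anchors A q"
      "z = a + node_dist E A x y + b" by auto
    then show "z \<in> ?via q p"
      by (intro rev_image_eqI[of "((y, b), (x, a))"]) (auto simp: node_dist_sym)
  qed
  then have "?via p q = ?via q p" by (meson subset_antisym)
  then show ?thesis unfolding mdist_def using direct_sym by metis
qed

fun walk_pos :: "('v set \<Rightarrow> real) \<Rightarrow> 'v list \<Rightarrow> real \<Rightarrow> 'v mpoint" where
  "walk_pos A [] x = Vtx undefined"
| "walk_pos A [a] x = Vtx a"
| "walk_pos A (a # b # r) x = (if x \<le> 0 then Vtx a else if x < A {a, b} then Mid a b x
     else walk_pos A (b # r) (x - A {a, b}))"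

lemma walk_pos_0: "walk_pos A (a # r) 0 = Vtx a"
  by (cases r) auto

context patrol_graph
begin

lemma walk_pos_valid: "is_walk E u w W \<Longrightarrow> u \<in> V \<Longrightarrow> valid_pt V E A (walk_pos A W x)"
proof (induction W arbitrary: u x rule: induct_list012)
  case (3 a b r)
  then show ?case using edgeD[of a b] by (auto simp: valid_pt_def)
qed (auto simp: valid_pt_def)

lemma walk_pos_to_end:
  assumes "is_walk E u w W" "u \<in> V" "0 \<le> x"
  shows "\<exists>(z, \<alpha>)\<in>anchors A (walk_pos A W x). z \<in> V \<and> \<alpha> + nd z w \<le> max 0 (walk_len A W - x)"
  using assms
proof (induction W arbitrary: u x rule: induct_list012)
  case (2 a)
  then show ?case by (auto simp: node_dist_refl)
next
  case (3 a b r)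
  have ab: "a \<in> V" "b \<in> V" "0 < A {a, b}" using 3 edgeD[of a b] by auto
  consider "x = 0" | "0 < x" "x < A {a, b}" | "A {a, b} \<le> x" using "3.prems" by linarith
  then show ?case
  proof cases
    case 1
    then show ?thesis using node_dist_le[of a w "a # b # r"] 3 ab by auto
  next
    case 2
    then have "A {a, b} - x + nd b w \<le> max 0 (walk_len A (a # b # r) - x)"
      using node_dist_le[of b w "b # r"] 3 by auto
    then show ?thesis using 2 ab by auto
  next
    case 3
    with "3.IH"(2)[of b "x - A {a, b}"] "3.prems" ab edgeD[of a b] show ?thesis
      by (auto simp: algebra_simps)
  qed
qed auto

lemma walk_pos_from_start:
  assumes "is_walk E u w W" "u \<in> V" "0 \<le> x"
  shows "\<exists>(z, \<beta>)\<in>anchors A (walk_pos A W x). z \<in> V \<and> nd u z + \<beta> \<le> x"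
  using assms
proof (induction W arbitrary: u x rule: induct_list012)
  case (2 a)
  then show ?case by (auto simp: node_dist_refl)
next
  case (3 a b r)
  have ab: "a \<in> V" "b \<in> V" "0 < A {a, b}" "u = a" using 3 edgeD[of a b] by auto
  consider "x = 0" | "0 < x" "x < A {a, b}" | "A {a, b} \<le> x" using "3.prems" by linarith
  then show ?case
  proof cases
    case 1
    then show ?thesis using ab by (intro bexI[of _ "(a, 0)"]) (auto simp: node_dist_refl)
  next
    case 2
    then show ?thesis using ab by (intro bexI[of _ "(a, x)"]) (auto simp: node_dist_refl)
  next
    case 3
    then obtain z \<beta> where z: "(z, \<beta>) \<in> anchors A (walk_pos A (b # r) (x - A {a, b}))"
      "z \<in> V" "nd b z + \<beta> \<le> x - A {a, b}"
      using "3.IH"(2)[of b "x - A {a, b}"] "3.prems" ab by auto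
    have "nd a z \<le> nd a b + nd b z" using node_dist_triangle ab z by blast
    moreover have "nd a b \<le> A {a, b}" using node_dist_edge "3.prems" by simp
    moreover have "walk_pos A (a # b # r) x = walk_pos A (b # r) (x - A {a, b})"
      using 3 edgeD[of a b] "3.prems" by simp
    ultimately show ?thesis using z ab by (intro bexI[of _ "(z, \<beta>)"]) auto
  qed
qed auto

lemma walk_pos_lipschitz:
  assumes "is_walk E u w W" "u \<in> V" "0 \<le> x" "x \<le> y"
  shows "mdist E A (walk_pos A W x) (walk_pos A W y) \<le> y - x"
  using assms
proof (induction W arbitrary: u x y rule: induct_list012)
  case (2 a)
  then show ?case by (auto simp: node_dist_refl)
next
  case (3 a b r)
  have ab: "a \<in> V" "b \<in> V" "0 < A {a, b}" "u = a" using 3 edgeD[of a b] by auto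
  consider "x = 0" | "0 < x" "x < A {a, b}" "y < A {a, b}" | "0 < x" "x < A {a, b}" "A {a, b} \<le> y"
    | "A {a, b} \<le> x" using "3.prems" by linarith
  then show ?case
  proof cases
    case 1
    obtain z \<beta> where z: "(z, \<beta>) \<in> anchors A (walk_pos A (a # b # r) y)" "z \<in> V" "nd a z + \<beta> \<le> y"
      using walk_pos_from_start[of u w "a # b # r" y] "3.prems" ab by fastforce
    have "mdist E A (Vtx a) (walk_pos A (a # b # r) y) \<le> 0 + nd a z + \<beta>"
      by (rule mdist_le_anchors[OF _ z(1)]) simp
    then show ?thesis using 1 z by simp
  next
    case 2
    have "mdist E A (Mid a b x) (Mid a b y) \<le> \<bar>x - y\<bar>" by (rule mdist_le_direct) simp
    then show ?thesis using 2 "3.prems" by auto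
  next
    case 3
    obtain z \<beta> where z: "(z, \<beta>) \<in> anchors A (walk_pos A (b # r) (y - A {a, b}))" "z \<in> V"
      "nd b z + \<beta> \<le> y - A {a, b}"
      using walk_pos_from_start[of b w "b # r" "y - A {a, b}"] "3.prems" ab 3 by fastforce
    have "mdist E A (Mid a b x) (walk_pos A (b # r) (y - A {a, b})) \<le> (A {a, b} - x) + nd b z + \<beta>"
      by (rule mdist_le_anchors[OF _ z(1)]) simp
    then show ?thesis using 3 z ab by auto
  next
    case 4
    then have "mdist E A (walk_pos A (b # r) (x - A {a, b})) (walk_pos A (b # r) (y - A {a, b}))
        \<le> (y - A {a, b}) - (x - A {a, b})"
      using "3.IH"(2)[of b "x - A {a, b}" "y - A {a, b}"] "3.prems" ab by simp
    then show ?thesis using 4 ab "3.prems" by simp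
  qed
qed auto

end

definition prev_in :: "real set \<Rightarrow> real \<Rightarrow> real" where
  "prev_in D t = Sup (D \<inter> {..t})"

definition next_in :: "real set \<Rightarrow> real \<Rightarrow> real" where
  "next_in D t = Inf (D \<inter> {t..})"

lemma prev_in:
  assumes "closed D" "D \<inter> {..t} \<noteq> {}"
  shows "prev_in D t \<in> D" "prev_in D t \<le> t" "\<And>d. d \<in> D \<Longrightarrow> d \<le> t \<Longrightarrow> d \<le> prev_in D t"
proof -
  have bdd: "bdd_above (D \<inter> {..t})" by (rule bdd_aboveI[of _ t]) auto
  have "prev_in D t \<in> D \<inter> {..t}" unfolding prev_in_def
    using assms by (intro closed_contains_Sup bdd) auto
  then show "prev_in D t \<in> D" "prev_in D t \<le> t" by auto
  show "d \<le> prev_in D t" if "d \<in> D" "d \<le> t" for d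
    unfolding prev_in_def using that bdd by (intro cSup_upper) auto
qed

lemma next_in:
  assumes "closed D" "D \<inter> {t..} \<noteq> {}"
  shows "next_in D t \<in> D" "t \<le> next_in D t" "\<And>d. d \<in> D \<Longrightarrow> t \<le> d \<Longrightarrow> next_in D t \<le> d"
proof -
  have bdd: "bdd_below (D \<inter> {t..})" by (rule bdd_belowI[of _ t]) auto
  have "next_in D t \<in> D \<inter> {t..}" unfolding next_in_def
    using assms by (intro closed_contains_Inf bdd) auto
  then show "next_in D t \<in> D" "t \<le> next_in D t" by auto
  show "next_in D t \<le> d" if "d \<in> D" "t \<le> d" for d
    unfolding next_in_def using that bdd by (intro cInf_lower) auto
qed

locale visit_schedule = patrol_graph V E A phi for V :: "'v set" and E A phi +
  fixes R :: "(real \<times> 'v) set"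
  assumes schedule_nodes: "R \<subseteq> UNIV \<times> V"
    and schedule_feasible: "(t, a) \<in> R \<Longrightarrow> (t', b) \<in> R \<Longrightarrow> nd a b \<le> \<bar>t - t'\<bar>"
    and schedule_closed: "v \<in> V \<Longrightarrow> closed {t. (t, v) \<in> R}"
begin

definition times :: "real set" where
  "times = fst ` R"

definition node_at :: "real \<Rightarrow> 'v" where
  "node_at t = (THE v. (t, v) \<in> R)"

lemma closed_times: "closed times"
proof -
  have "times = (\<Union>v\<in>V. {t. (t, v) \<in> R})"
    using schedule_nodes unfolding times_def by force
  then show ?thesis using finite_V schedule_closed by (simp add: closed_UN)
qed

lemma node_at_eq: "(t, v) \<in> R \<Longrightarrow> node_at t = v"
proof -
  assume tv: "(t, v) \<in> R"
  have "a = b" if "(t, a) \<in> R" "(t, b) \<in> R" for a b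
    using schedule_feasible[OF that] node_dist_pos[of a b] that schedule_nodes by fastforce
  with tv show ?thesis unfolding node_at_def by blast
qed

lemma node_at: "t \<in> times \<Longrightarrow> (t, node_at t) \<in> R \<and> node_at t \<in> V"
  using node_at_eq schedule_nodes unfolding times_def by force

definition trajectory :: "real \<Rightarrow> 'v mpoint" where
  "trajectory t =
    (if times \<inter> {..t} = {} then
       (if times \<inter> {t..} = {} then Vtx (SOME v. v \<in> V) else Vtx (node_at (next_in times t)))
     else if times \<inter> {t..} = {} then Vtx (node_at (prev_in times t))
     else walk_pos A (shortest_walk (node_at (prev_in times t)) (node_at (next_in times t)))
            (t - prev_in times t))"

lemma trajectory_valid: "valid_pt V E A (trajectory t)"
proof -
  consider "times \<inter> {..t} = {}" "times \<inter> {t..} = {}" | "times \<inter> {..t} = {}" "times \<inter> {t..} \<noteq> {}"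
    | "times \<inter> {..t} \<noteq> {}" "times \<inter> {t..} = {}" | "times \<inter> {..t} \<noteq> {}" "times \<inter> {t..} \<noteq> {}"
    by blast
  then show ?thesis
  proof cases
    case 1
    then show ?thesis using V_nonempty by (simp add: trajectory_def valid_pt_def some_in_eq)
  next
    case 2
    then show ?thesis
      using node_at next_in(1)[OF closed_times] by (simp add: trajectory_def valid_pt_def)
  next
    case 3
    then show ?thesis
      using node_at prev_in(1)[OF closed_times] by (simp add: trajectory_def valid_pt_def)
  next
    case 4
    then have a: "node_at (prev_in times t) \<in> V" and b: "node_at (next_in times t) \<in> V"
      using node_at prev_in(1)[OF closed_times] next_in(1)[OF closed_times] by auto
    with 4 show ?thesis
      using walk_pos_valid[OF conjunct1[OF shortest_walk[OF a b]] a] by (simp add: trajectory_def)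
  qed
qed

lemma trajectory_visits: "(t, v) \<in> R \<Longrightarrow> trajectory t = Vtx v"
proof -
  assume tv: "(t, v) \<in> R"
  then have t: "t \<in> times" unfolding times_def by force
  then have ne: "times \<inter> {..t} \<noteq> {}" "times \<inter> {t..} \<noteq> {}" by auto
  have "prev_in times t = t" "next_in times t = t"
    using prev_in[OF closed_times ne(1)] next_in[OF closed_times ne(2)] t by force+
  then show ?thesis
    using ne shortest_walk[of v v] node_at_eq[OF tv] node_at[OF t]
    by (cases "shortest_walk v v") (auto simp: trajectory_def walk_pos_0 dest: is_walk_Cons_hd)
qed

lemma trajectory_to_next:
  assumes ne: "times \<inter> {t..} \<noteq> {}"
  defines "n \<equiv> next_in times t"
  shows "\<exists>(z, \<alpha>)\<in>anchors A (trajectory t). z \<in> V \<and> \<alpha> + nd z (node_at n) \<le> n - t"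
proof (cases "times \<inter> {..t} = {}")
  case True
  have n: "n \<in> times" "t \<le> n" using next_in[OF closed_times ne] unfolding n_def by auto
  have "trajectory t = Vtx (node_at n)" using True ne unfolding trajectory_def n_def by simp
  then show ?thesis using node_at[OF n(1)] n(2) by (simp add: node_dist_refl)
next
  case False
  define p where "p = prev_in times t"
  have p: "p \<in> times" "p \<le> t" and n: "n \<in> times" "t \<le> n"
    using prev_in[OF closed_times False] next_in[OF closed_times ne] unfolding p_def n_def by auto
  let ?W = "shortest_walk (node_at p) (node_at n)"
  have W: "is_walk E (node_at p) (node_at n) ?W" "walk_len A ?W = nd (node_at p) (node_at n)"
    using shortest_walk node_at p(1) n(1) by auto
  have "walk_len A ?W \<le> n - p"
    using W(2) schedule_feasible[of p _ n] node_at[OF p(1)] node_at[OF n(1)] p n by simp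
  moreover have "\<exists>(z, \<alpha>)\<in>anchors A (walk_pos A ?W (t - p)). z \<in> V \<and>
      \<alpha> + nd z (node_at n) \<le> max 0 (walk_len A ?W - (t - p))"
    using walk_pos_to_end[OF W(1), of "t - p"] node_at[OF p(1)] p(2) by simp
  then obtain z \<alpha> where "(z, \<alpha>) \<in> anchors A (walk_pos A ?W (t - p))" "z \<in> V"
      "\<alpha> + nd z (node_at n) \<le> max 0 (walk_len A ?W - (t - p))"
    by blast
  moreover have "trajectory t = walk_pos A ?W (t - p)"
    using False ne unfolding trajectory_def p_def n_def by simp
  ultimately show ?thesis using n(2) by (intro bexI[of _ "(z, \<alpha>)"]) auto
qed

lemma trajectory_from_prev:
  assumes ne: "times \<inter> {..t} \<noteq> {}"
  defines "p \<equiv> prev_in times t"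
  shows "\<exists>(z, \<beta>)\<in>anchors A (trajectory t). z \<in> V \<and> nd (node_at p) z + \<beta> \<le> t - p"
proof (cases "times \<inter> {t..} = {}")
  case True
  have p: "p \<in> times" "p \<le> t" using prev_in[OF closed_times ne] unfolding p_def by auto
  have "trajectory t = Vtx (node_at p)" using True ne unfolding trajectory_def p_def by simp
  then show ?thesis using node_at[OF p(1)] p(2) by (simp add: node_dist_refl)
next
  case False
  define n where "n = next_in times t"
  have p: "p \<in> times" "p \<le> t" and n: "n \<in> times"
    using prev_in[OF closed_times ne] next_in[OF closed_times False] unfolding p_def n_def by auto
  let ?W = "shortest_walk (node_at p) (node_at n)"
  have "is_walk E (node_at p) (node_at n) ?W"
    using shortest_walk node_at p(1) n(1) by auto
  moreover have "trajectory t = walk_pos A ?W (t - p)"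
    using False ne unfolding trajectory_def p_def n_def by simp
  ultimately show ?thesis using walk_pos_from_start node_at p by simp
qed

text \<open>The estimate is routed through the first scheduled visit after \<open>t\<close> and the last one
  before \<open>t'\<close>.\<close>
lemma trajectory_lipschitz_across:
  assumes "d \<in> times" "t \<le> d" "d \<le> t'"
  shows "mdist E A (trajectory t) (trajectory t') \<le> t' - t"
proof -
  have ne: "times \<inter> {t..} \<noteq> {}" "times \<inter> {..t'} \<noteq> {}" using assms by auto
  define n p where "n = next_in times t" and "p = prev_in times t'"
  have n: "n \<in> times" "n \<le> d" and p: "p \<in> times" "d \<le> p"
    using assms next_in[OF closed_times ne(1)] prev_in[OF closed_times ne(2)]
    unfolding n_def p_def by auto
  obtain z \<alpha> where z: "(z, \<alpha>) \<in> anchors A (trajectory t)" "z \<in> V" "\<alpha> + nd z (node_at n) \<le> n - t"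
    using trajectory_to_next[OF ne(1)] unfolding n_def by blast
  obtain z' \<beta> where z': "(z', \<beta>) \<in> anchors A (trajectory t')" "z' \<in> V"
    "nd (node_at p) z' + \<beta> \<le> t' - p"
    using trajectory_from_prev[OF ne(2)] unfolding p_def by blast
  have np: "nd (node_at n) (node_at p) \<le> p - n"
    using schedule_feasible[of n _ p] node_at[OF n(1)] node_at[OF p(1)] n p by simp
  have "nd z z' \<le> nd z (node_at n) + nd (node_at n) z'"
    using node_dist_triangle node_at[OF n(1)] z(2) z'(2) by blast
  moreover have "nd (node_at n) z' \<le> nd (node_at n) (node_at p) + nd (node_at p) z'"
    using node_dist_triangle node_at[OF n(1)] node_at[OF p(1)] z'(2) by blast
  moreover have "mdist E A (trajectory t) (trajectory t') \<le> \<alpha> + nd z z' + \<beta>"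
    by (rule mdist_le_anchors[OF z(1) z'(1)])
  ultimately show ?thesis using z(3) z'(3) np by linarith
qed

lemma trajectory_lipschitz_within:
  assumes "t \<le> t'" "times \<inter> {t..t'} = {}"
  shows "mdist E A (trajectory t) (trajectory t') \<le> t' - t"
proof -
  have gap: "d < t \<or> t' < d" if "d \<in> times" for d
  proof (rule ccontr)
    assume "\<not> (d < t \<or> t' < d)"
    then have "d \<in> times \<inter> {t..t'}" using that by auto
    then show False using assms(2) by blast
  qed
  have same: "times \<inter> {..t'} = times \<inter> {..t}" "times \<inter> {t'..} = times \<inter> {t..}"
    using assms(1) by (auto dest: gap)
  show ?thesis
  proof (cases "times \<inter> {..t} = {} \<or> times \<inter> {t..} = {}")
    case True
    then have "trajectory t' = trajectory t"
      using same by (auto simp: trajectory_def prev_in_def next_in_def)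
    moreover have "\<exists>w. trajectory t = Vtx w"
      using True unfolding trajectory_def by auto
    then obtain w where w: "trajectory t = Vtx w" by blast
    moreover have "w \<in> V" using trajectory_valid[of t] w by (simp add: valid_pt_def)
    ultimately show ?thesis using assms(1) by (simp add: node_dist_refl)
  next
    case False
    define p n where "p = prev_in times t" and "n = next_in times t"
    have "prev_in times t' = p" "next_in times t'= n"
      unfolding p_def n_def prev_in_def next_in_def same by simp_all
    then have traj: "trajectory s = walk_pos A (shortest_walk (node_at p) (node_at n)) (s - p)"
      if "s \<in> {t, t'}" for s
      using False same that unfolding trajectory_def p_def n_def by auto
    have "p \<in> times" "p \<le> t" "n \<in> times"
      using False prev_in[OF closed_times] next_in[OF closed_times] unfolding p_def n_def by auto
    then show ?thesis
      using walk_pos_lipschitz[of "node_at p" "node_at n" _ "t - p" "t' - p"] traj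
        shortest_walk node_at assms(1) by simp
  qed
qed

lemma trajectory_lipschitz: "mdist E A (trajectory t) (trajectory t') \<le> \<bar>t - t'\<bar>"
proof -
  have "mdist E A (trajectory t) (trajectory t') \<le> t' - t" if "t \<le> t'" for t t'
  proof (cases "times \<inter> {t..t'} = {}")
    case False
    then obtain d where "d \<in> times" "t \<le> d" "d \<le> t'" by auto
    then show ?thesis by (rule trajectory_lipschitz_across)
  qed (rule trajectory_lipschitz_within[OF that])
  from this[of t t'] this[of t' t] show ?thesis
    by (cases "t \<le> t'") (simp_all add: mdist_sym)
qed

end

definition free_filter :: "nat set set \<Rightarrow> bool" where
  "free_filter F \<longleftrightarrow> {} \<notin> F \<and> (\<forall>X Y. X \<in> F \<longrightarrow> X \<subseteq> Y \<longrightarrow> Y \<in> F) \<and>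
     (\<forall>X\<in>F. \<forall>Y\<in>F. X \<inter> Y \<in> F) \<and> (\<forall>N. {N..} \<in> F)"

definition free_ultrafilter :: "nat set set \<Rightarrow> bool" where
  "free_ultrafilter U \<longleftrightarrow> free_filter U \<and> (\<forall>X. X \<in> U \<or> - X \<in> U)"

lemma free_filter_cofinite: "free_filter {X. \<exists>N. {N..} \<subseteq> X}"
  unfolding free_filter_def
proof (intro conjI allI impI ballI)
  show "X \<inter> Y \<in> {X. \<exists>N. {N..} \<subseteq> X}"
    if XY: "X \<in> {X. \<exists>N. {N..} \<subseteq> X}" "Y \<in> {X. \<exists>N. {N..} \<subseteq> X}" for X Y :: "nat set"
  proof -
    obtain N1 N2 :: nat where "{N1..} \<subseteq> X" "{N2..} \<subseteq> Y" using XY by auto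
    then have "{max N1 N2..} \<subseteq> X \<inter> Y" by auto
    then show ?thesis by blast
  qed
qed auto

lemma free_filter_Union_chain:
  assumes "C \<in> chains {F. free_filter F}" "C \<noteq> {}"
  shows "free_filter (\<Union>C)"
proof -
  have filt: "free_filter F" if "F \<in> C" for F
    using assms(1) that by (auto simp: chains_def)
  have chain: "F \<subseteq> G \<or> G \<subseteq> F" if "F \<in> C" "G \<in> C" for F G
    using assms(1) that by (auto simp: chains_def chain_subset_def)
  have "X \<inter> Y \<in> \<Union>C" if "X \<in> \<Union>C" "Y \<in> \<Union>C" for X Y
  proof -
    from that obtain F G where FG: "F \<in> C" "G \<in> C" "X \<in> F" "Y \<in> G"
      by (elim UnionE)
    from chain[OF FG(1,2)] obtain H where "H \<in> C" "X \<in> H" "Y \<in> H"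
      using FG by blast
    with filt[of H] show ?thesis unfolding free_filter_def by blast
  qed
  moreover obtain F0 where "F0 \<in> C" using assms(2) by blast
  ultimately show ?thesis
    using filt unfolding free_filter_def by (smt (verit) UnionE UnionI)
qed

text \<open>A maximal free filter decides every set \<open>X\<close>: if \<open>-X\<close> is not in it, adjoining \<open>X\<close>
  still gives a free filter.\<close>
lemma maximal_free_filter_ultra:
  assumes M: "free_filter M" "\<And>F. free_filter F \<Longrightarrow> M \<subseteq> F \<Longrightarrow> F = M"
  shows "free_ultrafilter M"
proof -
  have "X \<in> M" if nX: "- X \<notin> M" for X
  proof -
    define M' where "M' = {Y. \<exists>Z\<in>M. Z \<inter> X \<subseteq> Y}"
    have "free_filter M'"
      unfolding free_filter_def
    proof (intro conjI allI impI ballI)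
      show "{} \<notin> M'"
      proof
        assume "{} \<in> M'"
        then obtain Z where "Z \<in> M" "Z \<subseteq> - X" unfolding M'_def by auto
        then show False using nX M(1) unfolding free_filter_def by blast
      qed
      show "Y' \<in> M'" if "Y \<in> M'" "Y \<subseteq> Y'" for Y Y'
        using that unfolding M'_def by blast
      show "Y1 \<inter> Y2 \<in> M'" if Y: "Y1 \<in> M'" "Y2 \<in> M'" for Y1 Y2
      proof -
        obtain Z1 Z2 where Z: "Z1 \<in> M" "Z2 \<in> M" "Z1 \<inter> X \<subseteq> Y1" "Z2 \<inter> X \<subseteq> Y2"
          using Y unfolding M'_def by auto
        then have "Z1 \<inter> Z2 \<in> M" using M(1) unfolding free_filter_def by blast
        with Z show ?thesis unfolding M'_def by blast
      qed
      show "{N..} \<in> M'" for N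
        using M(1) unfolding M'_def free_filter_def by blast
    qed
    moreover have "M \<subseteq> M'" unfolding M'_def by blast
    ultimately have "M' = M" using M(2) by blast
    moreover have "UNIV \<in> M" using M(1) unfolding free_filter_def by (metis atLeast_0)
    ultimately show "X \<in> M" unfolding M'_def by blast
  qed
  with M(1) show ?thesis unfolding free_ultrafilter_def by blast
qed

lemma free_ultrafilter_exists: "\<exists>U. free_ultrafilter U"
proof -
  have "\<exists>M\<in>{F. free_filter F}. \<forall>F\<in>{F. free_filter F}. M \<subseteq> F \<longrightarrow> F = M"
  proof (rule Zorn_Lemma2, rule ballI)
    fix C assume "C \<in> chains {F. free_filter F}"
    show "\<exists>U\<in>{F. free_filter F}. \<forall>F\<in>C. F \<subseteq> U"
    proof (cases "C = {}")
      case True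
      then show ?thesis using free_filter_cofinite by blast
    next
      case False
      then show ?thesis using free_filter_Union_chain[OF \<open>C \<in> _\<close>] by blast
    qed
  qed
  then show ?thesis using maximal_free_filter_ultra by blast
qed

context
  fixes U assumes U: "free_ultrafilter U"
begin

lemma ultra_mono: "X \<in> U \<Longrightarrow> X \<subseteq> Y \<Longrightarrow> Y \<in> U"
  using U unfolding free_ultrafilter_def free_filter_def by blast

lemma ultra_Int: "X \<in> U \<Longrightarrow> Y \<in> U \<Longrightarrow> X \<inter> Y \<in> U"
  using U unfolding free_ultrafilter_def free_filter_def by blast

lemma ultra_nonempty: "X \<in> U \<Longrightarrow> \<exists>n. n \<in> X"
  using U unfolding free_ultrafilter_def free_filter_def by (metis ex_in_conv)

lemma ultra_eventually: "eventually P sequentially \<Longrightarrow> {n. P n} \<in> U"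
  using U unfolding eventually_sequentially free_ultrafilter_def free_filter_def
  by (metis atLeast_iff subsetI mem_Collect_eq)

lemma ultra_finite_UN: "(\<Union>i<(k::nat). X i) \<in> U \<Longrightarrow> \<exists>i<k. X i \<in> U"
proof (induction k)
  case 0
  then show ?case using U unfolding free_ultrafilter_def free_filter_def by simp
next
  case (Suc k)
  show ?case
  proof (cases "X k \<in> U")
    case False
    then have "- X k \<in> U" using U unfolding free_ultrafilter_def by blast
    with Suc.prems have "(\<Union>i<Suc k. X i) \<inter> - X k \<in> U" by (rule ultra_Int)
    then have "(\<Union>i<k. X i) \<in> U" by (rule ultra_mono) (auto simp: lessThan_Suc)
    then show ?thesis using Suc.IH less_Suc_eq by blast
  qed blast
qed

text \<open>The limit is the supremum of the levels that \<open>s\<close> exceeds \<open>U\<close>-almost always.\<close>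
lemma ultra_limit:
  fixes s :: "nat \<Rightarrow> real"
  assumes b: "{n. lo \<le> s n \<and> s n \<le> hi} \<in> U"
  shows "\<exists>l. lo \<le> l \<and> l \<le> hi \<and> (\<forall>\<epsilon>>0. {n. \<bar>s n - l\<bar> < \<epsilon>} \<in> U)"
proof -
  define X where "X = {x. {n. x \<le> s n} \<in> U}"
  have lo: "lo \<in> X" unfolding X_def mem_Collect_eq by (rule ultra_mono[OF b]) auto
  have hi: "x \<le> hi" if "x \<in> X" for x
  proof (rule ccontr)
    assume "\<not> x \<le> hi"
    then have "{n. x \<le> s n} \<inter> {n. lo \<le> s n \<and> s n \<le> hi} = {}" by auto
    then show False using ultra_Int[OF _ b] that ultra_nonempty unfolding X_def by fastforce
  qed
  have bdd: "bdd_above X" using hi by (intro bdd_aboveI[of _ hi]) blast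
  define l where "l = Sup X"
  have "{n. \<bar>s n - l\<bar> < \<epsilon>} \<in> U" if \<epsilon>: "\<epsilon> > 0" for \<epsilon>
  proof -
    obtain x where "x \<in> X" "l - \<epsilon> < x"
      using less_cSupD[of X "l - \<epsilon>"] lo \<epsilon> unfolding l_def by auto
    then have above: "{n. l - \<epsilon> < s n} \<in> U" unfolding X_def by (rule_tac ultra_mono) auto
    have "l + \<epsilon>/2 \<notin> X"
      using cSup_upper[OF _ bdd, of "l + \<epsilon>/2"] \<epsilon> unfolding l_def by auto
    then have "- {n. l + \<epsilon>/2 \<le> s n} \<in> U" using U unfolding X_def free_ultrafilter_def by blast
    with above have "{n. l - \<epsilon> < s n} \<inter> - {n. l + \<epsilon>/2 \<le> s n} \<in> U" by (rule ultra_Int)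
    then show ?thesis by (rule ultra_mono) (auto simp: abs_less_iff)
  qed
  moreover have "lo \<le> l" "l \<le> hi"
    unfolding l_def using lo bdd hi by (auto intro: cSup_upper cSup_least)
  ultimately show ?thesis by blast
qed

lemma ultra_limit_ge:
  fixes a s :: "nat \<Rightarrow> real"
  assumes "{n. a n \<le> s n} \<in> U" "a \<longlonglongrightarrow> a0" "\<And>\<epsilon>. \<epsilon> > 0 \<Longrightarrow> {n. \<bar>s n - l\<bar> < \<epsilon>} \<in> U"
  shows "a0 \<le> l"
proof (rule field_le_epsilon)
  fix e :: real assume "0 < e"
  then have e: "e/2 > 0" by simp
  have "{n. a0 - e/2 < a n} \<in> U"
    using order_tendstoD(1)[OF assms(2), of "a0 - e/2"] e by (intro ultra_eventually) simp
  with assms(1) assms(3)[OF e] have "{n. a n \<le> s n} \<inter> {n. \<bar>s n - l\<bar> < e/2} \<inter> {n. a0 - e/2 < a n} \<in> U"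
    by (intro ultra_Int)
  then obtain n where "a n \<le> s n" "\<bar>s n - l\<bar> < e/2" "a0 - e/2 < a n"
    using ultra_nonempty by blast
  then show "a0 \<le> l + e" by linarith
qed

end

definition visited_within :: "nat \<Rightarrow> (real \<Rightarrow> nat \<Rightarrow> 'v mpoint) \<Rightarrow> 'v \<Rightarrow> real \<Rightarrow> real \<Rightarrow> bool" where
  "visited_within k \<pi> v t L \<longleftrightarrow> (\<exists>s i. i < k \<and> 0 \<le> s \<and> t - L \<le> s \<and> s \<le> t \<and> \<pi> s i = Vtx v)"

lemma visited_within_mono: "visited_within k \<pi> v t L \<Longrightarrow> L \<le> L' \<Longrightarrow> visited_within k \<pi> v t L'"
  unfolding visited_within_def by (meson diff_left_mono order_trans)

lemma visited_within_shift:
  assumes "visited_within k \<rho> v (t + \<tau>) L" "L \<le> t"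
  shows "visited_within k (\<lambda>s. \<rho> (s + \<tau>)) v t L"
proof -
  obtain s i where "i < k" "t + \<tau> - L \<le> s" "s \<le> t + \<tau>" "\<rho> s i = Vtx v"
    using assms(1) unfolding visited_within_def by blast
  then show ?thesis
    using assms(2) unfolding visited_within_def by (intro exI[of _ "s - \<tau>"] exI[of _ i]) auto
qed

lemma last_visit_eq:
  "{t'. 0 \<le> t' \<and> t' \<le> t \<and> (\<exists>i<k. \<pi> t' i = Vtx v)} \<noteq> {} \<Longrightarrow>
    last_visit k \<pi> v t = Sup {t'. 0 \<le> t' \<and> t' \<le> t \<and> (\<exists>i<k. \<pi> t' i = Vtx v)}"
  unfolding last_visit_def Let_def by (rule if_not_P)

lemma last_visit_ge:
  assumes "i < k" "0 \<le> s" "s \<le> t" "\<pi> s i = Vtx v"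
  shows "s \<le> last_visit k \<pi> v t"
proof -
  let ?S = "{t'. 0 \<le> t' \<and> t' \<le> t \<and> (\<exists>i<k. \<pi> t' i = Vtx v)}"
  have s: "s \<in> ?S" using assms by blast
  then have ne: "?S \<noteq> {}" by blast
  have "s \<le> Sup ?S" using s by (rule cSup_upper) (rule bdd_aboveI[of _ t], blast)
  then show ?thesis using last_visit_eq[OF ne] by simp
qed

lemma last_visit_bounds: "0 \<le> last_visit k \<pi> v t" "0 \<le> t \<Longrightarrow> last_visit k \<pi> v t \<le> t"
proof -
  let ?S = "{t'. 0 \<le> t' \<and> t' \<le> t \<and> (\<exists>i<k. \<pi> t' i = Vtx v)}"
  have "0 \<le> last_visit k \<pi> v t \<and> (0 \<le> t \<longrightarrow> last_visit k \<pi> v t \<le> t)"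
  proof (cases "?S = {}")
    case False
    then obtain x where x: "x \<in> ?S" by blast
    have "x \<le> Sup ?S" by (rule cSup_upper[OF x]) (rule bdd_aboveI[of _ t], blast)
    moreover have "Sup ?S \<le> t" by (rule cSup_least[OF False]) blast
    ultimately show ?thesis using x last_visit_eq[OF False] by simp
  qed (simp add: last_visit_def)
  then show "0 \<le> last_visit k \<pi> v t" "0 \<le> t \<Longrightarrow> last_visit k \<pi> v t \<le> t" by auto
qed

lemma latency_le: "latency k \<pi> v t \<le> t"
  using last_visit_bounds(1)[of k \<pi> v t] unfolding latency_def by simp

lemma latency_nonneg: "0 \<le> t \<Longrightarrow> 0 \<le> latency k \<pi> v t"
  using last_visit_bounds(2)[of t k \<pi> v] unfolding latency_def by simp

lemma latency_le_of_visited: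
  assumes "visited_within k \<pi> v t L"
  shows "latency k \<pi> v t \<le> L"
proof -
  obtain s i where "i < k" "0 \<le> s" "t - L \<le> s" "s \<le> t" "\<pi> s i = Vtx v"
    using assms unfolding visited_within_def by blast
  then have "t - L \<le> last_visit k \<pi> v t" using last_visit_ge by fastforce
  then show ?thesis unfolding latency_def by simp
qed

text \<open>The converse needs the slack \<open>\<delta>\<close> (the last visit is only a supremum) and \<open>L < t\<close>
  (otherwise the latency may just count the time since the start).\<close>
lemma visited_of_latency_le:
  assumes "latency k \<pi> v t \<le> L" "L < t" "0 < \<delta>"
  shows "visited_within k \<pi> v t (L + \<delta>)"
proof -
  let ?S = "{t'. 0 \<le> t' \<and> t' \<le> t \<and> (\<exists>i<k. \<pi> t' i = Vtx v)}"
  have ne: "?S \<noteq> {}"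
  proof
    assume "?S = {}"
    then have "latency k \<pi> v t = t" unfolding latency_def last_visit_def by simp
    then show False using assms(1,2) by simp
  qed
  then have "t - (L + \<delta>) < Sup ?S"
    using assms(1,3) last_visit_eq[OF ne] unfolding latency_def by simp
  then obtain s where "s \<in> ?S" "t - (L + \<delta>) < s"
    using less_cSupD[OF ne] by blast
  then show ?thesis unfolding visited_within_def by (auto intro: less_imp_le)
qed

context patrol_graph
begin

lemma strategy_valid:
  "\<rho> \<in> strategies V E A k \<Longrightarrow> i < k \<Longrightarrow> 0 \<le> t \<Longrightarrow> valid_pt V E A (\<rho> t i)"
  unfolding strategies_def by blast

lemma strategy_lipschitz:
  assumes "\<rho> \<in> strategies V E A k" "i < k" "0 \<le> s" "0 \<le> s'"
  shows "mdist E A (\<rho> s i) (\<rho> s' i) \<le> \<bar>s - s'\<bar>"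
proof -
  have "mdist E A (\<rho> s i) (\<rho> s' i) \<le> Max ((\<lambda>i. mdist E A (\<rho> s i) (\<rho> s' i)) ` {..<k})"
    using assms(2) by (intro Max_ge) auto
  also have "\<dots> \<le> \<bar>s - s'\<bar>" using assms unfolding strategies_def by blast
  finally show ?thesis .
qed

lemma strategiesI:
  assumes "1 \<le> k"
    and "\<And>t i. 0 \<le> t \<Longrightarrow> i < k \<Longrightarrow> valid_pt V E A (\<rho> t i)"
    and "\<And>t t' i. 0 \<le> t \<Longrightarrow> 0 \<le> t' \<Longrightarrow> i < k \<Longrightarrow> mdist E A (\<rho> t i) (\<rho> t' i) \<le> \<bar>t - t'\<bar>"
  shows "\<rho> \<in> strategies V E A k"
proof -
  have "0 \<in> {..<k}" using assms(1) by simp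
  then have "{..<k} \<noteq> {}" by blast
  with assms(2,3) show ?thesis unfolding strategies_def by (auto simp: Max_le_iff)
qed

lemma stationary_strategy: "1 \<le> k \<Longrightarrow> v \<in> V \<Longrightarrow> (\<lambda>t i. Vtx v) \<in> strategies V E A k"
  by (rule strategiesI) (auto simp: valid_pt_def node_dist_refl)

lemma strategy_shift:
  assumes "\<rho> \<in> strategies V E A k" "0 \<le> \<tau>"
  shows "(\<lambda>t. \<rho> (t + \<tau>)) \<in> strategies V E A k"
  unfolding strategies_def
proof (intro CollectI conjI allI impI)
  fix t t' :: real assume "0 \<le> t" "0 \<le> t'"
  then have "0 \<le> t + \<tau>" "0 \<le> t' + \<tau>" using assms(2) by auto
  then have "Max ((\<lambda>i. mdist E A (\<rho> (t + \<tau>) i) (\<rho> (t' + \<tau>) i)) ` {..<k}) \<le> \<bar>(t + \<tau>) - (t' + \<tau>)\<bar>"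
    using assms(1) unfolding strategies_def by blast
  then show "Max ((\<lambda>i. mdist E A (\<rho> (t + \<tau>) i) (\<rho> (t' + \<tau>) i)) ` {..<k}) \<le> \<bar>t - t'\<bar>"
    by simp
next
  fix t :: real and i assume "0 \<le> t" "i < k"
  then show "valid_pt V E A (\<rho> (t + \<tau>) i)" using assms strategy_valid by simp
qed

lemma weighted_latency_le_worst_lat: "v \<in> V \<Longrightarrow> phi v * latency k \<pi> v t \<le> worst_lat V phi k \<pi> t"
  unfolding worst_lat_def using finite_V by (intro Max_ge) auto

lemma worst_lat_le:
  "(\<And>v. v \<in> V \<Longrightarrow> phi v * latency k \<pi> v t \<le> C) \<Longrightarrow> worst_lat V phi k \<pi> t \<le> C"
  unfolding worst_lat_def using finite_V V_nonempty by (subst Max_le_iff) auto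

lemma worst_lat_nonneg: "0 \<le> t \<Longrightarrow> 0 \<le> worst_lat V phi k \<pi> t"
proof -
  assume t: "0 \<le> t"
  obtain v where v: "v \<in> V" using V_nonempty by blast
  then have "0 \<le> phi v * latency k \<pi> v t" using phi_pos[OF v] latency_nonneg[OF t, of k \<pi> v] by simp
  then show ?thesis using weighted_latency_le_worst_lat[OF v] by (rule order_trans)
qed

lemma visited_of_worst_lat_le:
  assumes "worst_lat V phi k \<pi> t \<le> C" "v \<in> V" "C / phi v < t" "0 < \<delta>"
  shows "visited_within k \<pi> v t (C / phi v + \<delta>)"
proof (rule visited_of_latency_le[OF _ assms(3,4)])
  have "phi v * latency k \<pi> v t \<le> C"
    using weighted_latency_le_worst_lat[OF assms(2)] assms(1) by (rule order_trans)
  then show "latency k \<pi> v t \<le> C / phi v"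
    using phi_pos[OF assms(2)] by (simp add: pos_le_divide_eq mult.commute)
qed

lemma worst_lat_le_of_visited:
  assumes "\<And>v. v \<in> V \<Longrightarrow> c / phi v < t \<Longrightarrow> visited_within k \<pi> v t (c / phi v)"
  shows "worst_lat V phi k \<pi> t \<le> c"
proof (rule worst_lat_le)
  fix v assume v: "v \<in> V"
  have "latency k \<pi> v t \<le> c / phi v"
  proof (cases "c / phi v < t")
    case True
    have "visited_within k \<pi> v t (c / phi v)" using assms[OF v True] .
    then show ?thesis by (rule latency_le_of_visited)
  next
    case False
    then show ?thesis using latency_le[of k \<pi> v t] by simp
  qed
  then show "phi v * latency k \<pi> v t \<le> c"
    using phi_pos[OF v] by (simp add: pos_le_divide_eq mult.commute)
qed

end

locale ultralimit = patrol_graph V E A phi for V :: "'v set" and E A phi +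
  fixes k :: nat and \<rho> :: "nat \<Rightarrow> real \<Rightarrow> nat \<Rightarrow> 'v mpoint" and U :: "nat set set"
  assumes robots: "1 \<le> k"
    and strategies: "\<And>n. \<rho> n \<in> strategies V E A k"
    and U: "free_ultrafilter U"
begin

definition visits_near :: "nat \<Rightarrow> 'v \<Rightarrow> real \<Rightarrow> real \<Rightarrow> nat set" where
  "visits_near i v t \<epsilon> = {n. \<exists>s. 0 \<le> s \<and> \<bar>s - t\<bar> < \<epsilon> \<and> \<rho> n s i = Vtx v}"

definition limit_schedule :: "nat \<Rightarrow> (real \<times> 'v) set" where
  "limit_schedule i = {(t, v). v \<in> V \<and> (\<forall>\<epsilon>>0. visits_near i v t \<epsilon> \<in> U)}"

lemma limit_schedule_feasible:
  assumes "i < k" "(t, a) \<in> limit_schedule i" "(t', b) \<in> limit_schedule i"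
  shows "nd a b \<le> \<bar>t - t'\<bar>"
proof (rule field_le_epsilon)
  fix e :: real assume "0 < e"
  then have "e/2 > 0" by simp
  then have "visits_near i a t (e/2) \<inter> visits_near i b t' (e/2) \<in> U"
    using assms(2,3) unfolding limit_schedule_def by (intro ultra_Int[OF U]) auto
  then obtain n s s' where s: "0 \<le> s" "\<bar>s - t\<bar> < e/2" "\<rho> n s i = Vtx a"
    and s': "0 \<le> s'" "\<bar>s' - t'\<bar> < e/2" "\<rho> n s' i = Vtx b"
    using ultra_nonempty[OF U] unfolding visits_near_def by blast
  have "nd a b \<le> \<bar>s - s'\<bar>"
    using strategy_lipschitz[OF strategies[of n] assms(1) s(1) s'(1)] s(3) s'(3) by simp
  then show "nd a b \<le> \<bar>t - t'\<bar> + e" using s(2) s'(2) by linarith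
qed

lemma limit_schedule_closed: "closed {t. (t, v) \<in> limit_schedule i}"
proof -
  have "x \<in> {t. (t, v) \<in> limit_schedule i}" if x: "x \<in> closure {t. (t, v) \<in> limit_schedule i}" for x
  proof -
    have approx: "\<exists>y. (y, v) \<in> limit_schedule i \<and> \<bar>y - x\<bar> < \<epsilon>" if "\<epsilon> > 0" for \<epsilon>
      using x that by (simp add: closure_approachable dist_real_def)
    have "v \<in> V" using approx[of 1] unfolding limit_schedule_def by auto
    moreover have "visits_near i v x \<epsilon> \<in> U" if "\<epsilon> > 0" for \<epsilon>
    proof -
      have "\<epsilon>/2 > 0" using that by simp
      then obtain y where y: "(y, v) \<in> limit_schedule i" "\<bar>y - x\<bar> < \<epsilon>/2"
        using approx by blast
      then have "visits_near i v y (\<epsilon>/2) \<in> U"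
        using \<open>\<epsilon>/2 > 0\<close> unfolding limit_schedule_def by blast
      moreover have "visits_near i v y (\<epsilon>/2) \<subseteq> visits_near i v x \<epsilon>"
      proof
        fix n assume "n \<in> visits_near i v y (\<epsilon>/2)"
        then obtain s where "0 \<le> s" "\<bar>s - y\<bar> < \<epsilon>/2" "\<rho> n s i = Vtx v"
          unfolding visits_near_def by blast
        moreover have "\<bar>s - x\<bar> < \<epsilon>" using \<open>\<bar>s - y\<bar> < \<epsilon>/2\<close> y(2) by linarith
        ultimately show "n \<in> visits_near i v x \<epsilon>" unfolding visits_near_def by blast
      qed
      ultimately show ?thesis by (rule ultra_mono[OF U])
    qed
    ultimately show ?thesis unfolding limit_schedule_def by blast
  qed
  then have "closure {t. (t, v) \<in> limit_schedule i} \<subseteq> {t. (t, v) \<in> limit_schedule i}" by blast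
  then show ?thesis by (simp only: closure_subset_eq)
qed

lemma visit_schedule_limit:
  assumes "i < k"
  shows "visit_schedule V E A phi (limit_schedule i)"
proof (intro visit_schedule.intro visit_schedule_axioms.intro)
  show "patrol_graph V E A phi" by (rule patrol_graph_axioms)
  show "limit_schedule i \<subseteq> UNIV \<times> V" unfolding limit_schedule_def by auto
  show "nd a b \<le> \<bar>t - t'\<bar>" if "(t, a) \<in> limit_schedule i" "(t', b) \<in> limit_schedule i" for t a t' b
    using limit_schedule_feasible[OF assms that] .
  show "closed {t. (t, v) \<in> limit_schedule i}" for v by (rule limit_schedule_closed)
qed

definition limit_strategy :: "real \<Rightarrow> nat \<Rightarrow> 'v mpoint" where
  "limit_strategy t i = visit_schedule.trajectory V E A (limit_schedule i) t"

lemma limit_strategy: "limit_strategy \<in> strategies V E A k"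
proof (rule strategiesI[OF robots])
  fix t t' i assume "i < k"
  then interpret visit_schedule V E A phi "limit_schedule i" by (rule visit_schedule_limit)
  show "valid_pt V E A (limit_strategy t i)"
    unfolding limit_strategy_def by (rule trajectory_valid)
  show "mdist E A (limit_strategy t i) (limit_strategy t' i) \<le> \<bar>t - t'\<bar>"
    unfolding limit_strategy_def by (rule trajectory_lipschitz)
qed

lemma limit_strategy_visits: "i < k \<Longrightarrow> (t, v) \<in> limit_schedule i \<Longrightarrow> limit_strategy t i = Vtx v"
  unfolding limit_strategy_def by (rule visit_schedule.trajectory_visits[OF visit_schedule_limit])

lemma limit_schedule_memI:
  assumes "X \<in> U" "\<And>n. n \<in> X \<Longrightarrow> 0 \<le> s n \<and> \<rho> n (s n) j = Vtx v"
    and "\<And>\<epsilon>. \<epsilon> > 0 \<Longrightarrow> {n. \<bar>s n - l\<bar> < \<epsilon>} \<in> U" "v \<in> V"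
  shows "(l, v) \<in> limit_schedule j"
proof -
  have "visits_near j v l \<epsilon> \<in> U" if "\<epsilon> > 0" for \<epsilon>
  proof (rule ultra_mono[OF U])
    show "X \<inter> {n. \<bar>s n - l\<bar> < \<epsilon>} \<in> U"
      using assms(1) assms(3)[OF that] by (rule ultra_Int[OF U])
    show "X \<inter> {n. \<bar>s n - l\<bar> < \<epsilon>} \<subseteq> visits_near j v l \<epsilon>"
      using assms(2) unfolding visits_near_def by blast
  qed
  with assms(4) show ?thesis unfolding limit_schedule_def by blast
qed

text \<open>Visits of \<open>\<rho> n\<close> within windows converging to \<open>[t - L0, t]\<close> accumulate, along \<open>U\<close>,
  at a single robot and a single time in the limit window, which the limit schedule contains.\<close>
lemma limit_strategy_visited:
  assumes L: "L \<longlonglongrightarrow> L0" and vis: "{n. visited_within k (\<rho> n) v t (L n)} \<in> U" and v: "v \<in> V"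
  shows "visited_within k limit_strategy v t L0"
proof -
  define G where "G = {n. visited_within k (\<rho> n) v t (L n)}"
  have "\<forall>n\<in>G. \<exists>s i. i < k \<and> 0 \<le> s \<and> t - L n \<le> s \<and> s \<le> t \<and> \<rho> n s i = Vtx v"
    unfolding G_def visited_within_def by blast
  then obtain s i where sel: "\<And>n. n \<in> G \<Longrightarrow>
      i n < k \<and> 0 \<le> s n \<and> t - L n \<le> s n \<and> s n \<le> t \<and> \<rho> n (s n) (i n) = Vtx v"
    by metis
  obtain M where M: "\<And>n. \<bar>L n\<bar> \<le> M"
    using convergent_imp_bounded[OF L] unfolding bounded_iff by auto
  have "G \<subseteq> {n. t - M \<le> s n \<and> s n \<le> t}"
  proof
    fix n assume "n \<in> G"
    moreover have "L n \<le> M" using M[of n] by simp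
    ultimately show "n \<in> {n. t - M \<le> s n \<and> s n \<le> t}" using sel[of n] by auto
  qed
  with vis have "{n. t - M \<le> s n \<and> s n \<le> t} \<in> U"
    unfolding G_def by (rule ultra_mono[OF U])
  then obtain l where l: "l \<le> t" "\<And>\<epsilon>. \<epsilon> > 0 \<Longrightarrow> {n. \<bar>s n - l\<bar> < \<epsilon>} \<in> U"
    using ultra_limit[OF U] by blast
  have "G = (\<Union>j<k. {n \<in> G. i n = j})" using sel by blast
  then have "(\<Union>j<k. {n \<in> G. i n = j}) \<in> U" using vis unfolding G_def by (simp only:)
  then obtain j where j: "j < k" "{n \<in> G. i n = j} \<in> U"
    using ultra_finite_UN[OF U] by blast
  have "G \<subseteq> {n. 0 \<le> s n}" using sel by auto
  with vis have "{n. 0 \<le> s n} \<in> U" unfolding G_def by (rule ultra_mono[OF U])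
  then have "0 \<le> l"
    using ultra_limit_ge[OF U, of "\<lambda>_. 0" s 0 l] l(2) by simp
  have "G \<subseteq> {n. t - L n \<le> s n}" using sel by auto
  with vis have "{n. t - L n \<le> s n} \<in> U" unfolding G_def by (rule ultra_mono[OF U])
  then have "t - L0 \<le> l"
    using ultra_limit_ge[OF U, of "\<lambda>n. t - L n" s "t - L0" l] l(2)
      tendsto_diff[OF tendsto_const L] by simp
  moreover have "(l, v) \<in> limit_schedule j"
    using j(2) sel l(2) v by (intro limit_schedule_memI[of "{n \<in> G. i n = j}" s]) auto
  ultimately show ?thesis
    using limit_strategy_visits[OF j(1)] \<open>0 \<le> l\<close> l(1) j(1) unfolding visited_within_def by blast
qed
end

context patrol_graph
begin

lemma strategy_with_limit_visits:
  assumes "1 \<le> k" "\<And>n. \<rho> n \<in> strategies V E A k"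
    and L: "\<And>v. v \<in> V \<Longrightarrow> (\<lambda>n. L n v) \<longlonglongrightarrow> L0 v"
    and vis: "\<And>n t v \<delta>. T0 \<le> t \<Longrightarrow> v \<in> V \<Longrightarrow> L n v < t \<Longrightarrow> 0 < \<delta> \<Longrightarrow>
      visited_within k (\<rho> n) v t (L n v + \<delta>)"
  shows "\<exists>\<pi>\<in>strategies V E A k. \<forall>t v. T0 \<le> t \<longrightarrow> v \<in> V \<longrightarrow> L0 v < t \<longrightarrow> visited_within k \<pi> v t (L0 v)"
proof -
  obtain U where "free_ultrafilter U" using free_ultrafilter_exists by blast
  then interpret ultralimit V E A phi k \<rho> U
    using assms(1,2) by unfold_locales
  have "visited_within k limit_strategy v t (L0 v)" if "T0 \<le> t" "v \<in> V" "L0 v < t" for t v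
  proof (rule limit_strategy_visited)
    show "(\<lambda>n. L n v + 1 / real (Suc n)) \<longlonglongrightarrow> L0 v"
      using tendsto_add[OF L[OF \<open>v \<in> V\<close>] LIMSEQ_Suc[OF lim_1_over_n]] by simp
    have "eventually (\<lambda>n. L n v < t) sequentially"
      using order_tendstoD(2)[OF L[OF \<open>v \<in> V\<close>] \<open>L0 v < t\<close>] .
    then have "eventually (\<lambda>n. visited_within k (\<rho> n) v t (L n v + 1 / real (Suc n))) sequentially"
      by eventually_elim (use vis that in simp)
    then show "{n. visited_within k (\<rho> n) v t (L n v + 1 / real (Suc n))} \<in> U"
      by (rule ultra_eventually[OF U])
  qed (rule \<open>v \<in> V\<close>)
  then show ?thesis using limit_strategy by blast
qed

lemma cost_nonneg:
  assumes "0 \<le> T"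
  shows "0 \<le> cost V phi k T \<pi>"
proof (cases "T = \<infinity>")
  case True
  have "0 \<le> Limsup at_top (\<lambda>t. ereal (worst_lat V phi k \<pi> t))"
    by (rule le_Limsup) (auto simp: eventually_at_top_linorder intro!: exI[of _ 0] worst_lat_nonneg)
  then show ?thesis using True by (simp add: cost_def)
next
  case False
  have "0 \<le> real_of_ereal T" using assms by (simp add: real_of_ereal_pos)
  then have "(0::ereal) \<le> ereal (worst_lat V phi k \<pi> (real_of_ereal T))"
    using worst_lat_nonneg by simp
  also have "\<dots> \<le> (SUP t\<in>{real_of_ereal T..}. ereal (worst_lat V phi k \<pi> t))"
    by (rule SUP_upper) simp
  finally show ?thesis using False by (simp add: cost_def)
qed

text \<open>For \<open>T = \<infinity>\<close> the bound is required from time \<open>real_of_ereal \<infinity> = 0\<close> on.\<close>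
lemma cost_le:
  assumes "\<And>t. real_of_ereal T \<le> t \<Longrightarrow> worst_lat V phi k \<pi> t \<le> c"
  shows "cost V phi k T \<pi> \<le> ereal c"
proof (cases "T = \<infinity>")
  case True
  then have "eventually (\<lambda>t. ereal (worst_lat V phi k \<pi> t) \<le> ereal c) at_top"
    using assms by (auto simp: eventually_at_top_linorder)
  then show ?thesis using True by (simp add: cost_def Limsup_bounded)
qed (use assms in \<open>simp add: cost_def SUP_le_iff\<close>)

text \<open>For \<open>T = \<infinity>\<close> the witness is \<open>\<pi>\<close> shifted past the time after which its worst
  latency stays below \<open>C\<close>. The latencies of the shifted strategy are not those of \<open>\<pi>\<close>,
  which is why the bound is stated through visits.\<close>
lemma visited_of_cost_less:
  assumes "\<pi> \<in> strategies V E A k" "cost V phi k T \<pi> < ereal C"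
  shows "\<exists>\<rho>\<in>strategies V E A k. \<forall>t v \<delta>. real_of_ereal T \<le> t \<longrightarrow> v \<in> V \<longrightarrow> C / phi v < t \<longrightarrow>
    0 < \<delta> \<longrightarrow> visited_within k \<rho> v t (C / phi v + \<delta>)"
proof (cases "T = \<infinity>")
  case False
  have "worst_lat V phi k \<pi> t \<le> C" if "real_of_ereal T \<le> t" for t
  proof -
    have "ereal (worst_lat V phi k \<pi> t) \<le> cost V phi k T \<pi>"
      using False that unfolding cost_def by (auto intro: SUP_upper)
    then have "ereal (worst_lat V phi k \<pi> t) < ereal C" using assms(2) by (rule le_less_trans)
    then show ?thesis by simp
  qed
  then have "\<forall>t v \<delta>. real_of_ereal T \<le> t \<longrightarrow> v \<in> V \<longrightarrow> C / phi v < t \<longrightarrow> 0 < \<delta> \<longrightarrow>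
      visited_within k \<pi> v t (C / phi v + \<delta>)"
    by (auto intro: visited_of_worst_lat_le)
  with assms(1) show ?thesis by blast
next
  case True
  then have "Limsup at_top (\<lambda>t. ereal (worst_lat V phi k \<pi> t)) < ereal C"
    using assms(2) by (simp add: cost_def)
  then have "eventually (\<lambda>t. ereal (worst_lat V phi k \<pi> t) < ereal C) at_top"
    by (rule Limsup_lessD)
  then obtain N where "\<forall>t\<ge>N. worst_lat V phi k \<pi> t < C"
    by (auto simp: eventually_at_top_linorder)
  then have N: "\<And>t. N \<le> t \<Longrightarrow> worst_lat V phi k \<pi> t \<le> C" by (simp add: less_imp_le)
  define \<tau> where "\<tau> = max 0 N"
  have "visited_within k (\<lambda>s. \<pi> (s + \<tau>)) v t (C / phi v + \<delta>)"
    if "0 \<le> t" "v \<in> V" "C / phi v < t" "0 < \<delta>" for t v \<delta>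
  proof -
    define d where "d = min \<delta> (t - C / phi v)"
    have d: "0 < d" "d \<le> \<delta>" "C / phi v + d \<le> t" using that by (auto simp: d_def)
    have "worst_lat V phi k \<pi> (t + \<tau>) \<le> C" using N that(1) by (simp add: \<tau>_def)
    moreover have "C / phi v < t + \<tau>" using that(3) by (simp add: \<tau>_def)
    ultimately have "visited_within k \<pi> v (t + \<tau>) (C / phi v + d)"
      using visited_of_worst_lat_le that(2) d(1) by blast
    then have "visited_within k (\<lambda>s. \<pi> (s + \<tau>)) v t (C / phi v + d)"
      using d(3) by (rule visited_within_shift)
    then show ?thesis by (rule visited_within_mono) (use d(2) in simp)
  qed
  moreover have "(\<lambda>s. \<pi> (s + \<tau>)) \<in> strategies V E A k"
    using assms(1) by (rule strategy_shift) (simp add: \<tau>_def)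
  moreover have "real_of_ereal T = 0" using True by simp
  ultimately show ?thesis by (intro bexI[of _ "\<lambda>s. \<pi> (s + \<tau>)"]) auto
qed

lemma near_optimal_strategies:
  assumes "(INF \<pi>\<in>strategies V E A k. cost V phi k T \<pi>) = ereal c"
  shows "\<exists>\<rho>. \<forall>n. \<rho> n \<in> strategies V E A k \<and> (\<forall>t v \<delta>. real_of_ereal T \<le> t \<longrightarrow> v \<in> V \<longrightarrow>
    (c + 1 / Suc n) / phi v < t \<longrightarrow> 0 < \<delta> \<longrightarrow> visited_within k (\<rho> n) v t ((c + 1 / Suc n) / phi v + \<delta>))"
proof -
  have "\<exists>\<rho>\<in>strategies V E A k. \<forall>t v \<delta>. real_of_ereal T \<le> t \<longrightarrow> v \<in> V \<longrightarrow>
    (c + 1 / Suc n) / phi v < t \<longrightarrow> 0 < \<delta> \<longrightarrow> visited_within k \<rho> v t ((c + 1 / Suc n) / phi v + \<delta>)"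
    for n
  proof -
    have "(INF \<pi>\<in>strategies V E A k. cost V phi k T \<pi>) < ereal (c + 1 / Suc n)"
      using assms by simp
    then obtain \<pi> where "\<pi> \<in> strategies V E A k" "cost V phi k T \<pi> < ereal (c + 1 / Suc n)"
      by (auto simp: INF_less_iff)
    then show ?thesis by (rule visited_of_cost_less)
  qed
  then show ?thesis by (subst choice_iff[symmetric]) blast
qed

end

theorem mainTheorem1:
  fixes V :: "'v set" and E :: "'v set set" and A :: "'v set \<Rightarrow> real"
    and phi :: "'v \<Rightarrow> real" and k :: nat and T :: ereal
  assumes "graph_ok V E A phi"
    and "k \<ge> 1"
    and "T \<ge> 0"
  shows "\<exists>\<pi>s\<in>strategies V E A k.
           cost V phi k T \<pi>s = (INF \<pi>\<in>strategies V E A k. cost V phi k T \<pi>)"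
proof -
  interpret patrol_graph V E A phi by unfold_locales (rule assms(1))
  let ?S = "strategies V E A k" and ?I = "INF \<pi>\<in>strategies V E A k. cost V phi k T \<pi>"
  obtain v where "v \<in> V" using V_nonempty by blast
  then have stationary: "(\<lambda>t i. Vtx v) \<in> ?S" by (rule stationary_strategy[OF assms(2)])
  have "0 \<le> ?I" using cost_nonneg[OF assms(3)] by (simp add: le_INF_iff)
  then consider "?I = \<infinity>" | c where "?I = ereal c" by (cases ?I) auto
  then show ?thesis
  proof cases
    case 1
    then have "cost V phi k T (\<lambda>t i. Vtx v) = ?I"
      using INF_lower[OF stationary, of "cost V phi k T"] by simp
    with stationary show ?thesis by blast
  next
    case (2 c)
    have "(\<lambda>n. c + 1 / Suc n) \<longlonglongrightarrow> c"
      using tendsto_add[OF tendsto_const LIMSEQ_Suc[OF lim_1_over_n]] by simp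
    then have lim: "(\<lambda>n. (c + 1 / Suc n) / phi v) \<longlonglongrightarrow> c / phi v" for v
      unfolding divide_inverse[of _ "phi v"] by (rule tendsto_mult_right)
    obtain \<rho> where "\<And>n. \<rho> n \<in> ?S" and "\<And>n t v \<delta>. real_of_ereal T \<le> t \<Longrightarrow> v \<in> V \<Longrightarrow>
        (c + 1 / Suc n) / phi v < t \<Longrightarrow> 0 < \<delta> \<Longrightarrow> visited_within k (\<rho> n) v t ((c + 1 / Suc n) / phi v + \<delta>)"
      using near_optimal_strategies[OF 2] by blast
    with lim obtain \<pi> where \<pi>: "\<pi> \<in> ?S"
      and "\<And>t v. real_of_ereal T \<le> t \<Longrightarrow> v \<in> V \<Longrightarrow> c / phi v < t \<Longrightarrow> visited_within k \<pi> v t (c / phi v)"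
      using strategy_with_limit_visits[OF assms(2), of \<rho> "\<lambda>n v. (c + 1 / Suc n) / phi v" "\<lambda>v. c / phi v"]
      by blast
    then have "cost V phi k T \<pi> \<le> ?I"
      unfolding 2 by (intro cost_le worst_lat_le_of_visited)
    then show ?thesis using INF_lower[OF \<pi>] \<pi> by (blast intro: order_antisym)
  qed
qed

end
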